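(* Let $M(n)$ denote the maximum cardinality of a set $\mathsf{B}\subseteq\{0,1\}^n$ such that any two distinct strings in $\mathsf{B}$ have a skewincidence. Then $$\lim_{n\to\infty}\frac{M(n)}{2^n}=1.$$
   Context: Two binary strings $\mathbf{x}=x_1\dots x_n$ and $\mathbf{y}=y_1\dots y_n$ in $\{0,1\}^n$ have a skew coincidence (skewincidence) if there is a coordinate $i\in[n-1]$ with $x_i=y_{i+1}=1$ or $x_{i+1}=y_i=1$. *)

theory Defs
  imports Complex_Main
begin

text \<open>Binary strings of length n are represented as boolean lists of length n
(True = 1), with positions indexed 0..n-1.\<close>

definition binstrings :: "nat \<Rightarrow> bool list set" where
  "binstrings n = {x. length x = n}"

definition skewincidence :: "bool list \<Rightarrow> bool list \<Rightarrow> bool" where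
  "skewincidence x y \<longleftrightarrow>
     (\<exists>i. Suc i < length x \<and> Suc i < length y \<and>
          ((x ! i \<and> y ! Suc i) \<or> (x ! Suc i \<and> y ! i)))"

definition skew_family :: "nat \<Rightarrow> bool list set \<Rightarrow> bool" where
  "skew_family n B \<longleftrightarrow> B \<subseteq> binstrings n \<and>
     (\<forall>x\<in>B. \<forall>y\<in>B. x \<noteq> y \<longrightarrow> skewincidence x y)"

definition M :: "nat \<Rightarrow> nat" where
  "M n = Max (card ` {B. skew_family n B})"

end

theory Submission
  imports Defs
begin

text \<open>Cut strings into consecutive blocks of length 5. Among the 32 blocks there are 18 that
pairwise have a skewincidence; call them good. Two strings of equal length in which more than
half of the blocks are good share a position where both blocks are good, and that pair of blocks
already yields a skewincidence of the strings. A uniformly random block is good with probability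
18/32 > 1/2, so by an exponential Chernoff bound all but an exponentially small fraction of the
strings have a majority of good blocks.\<close>

lemma skewincidence_Nil [simp]: "\<not> skewincidence [] ys"
  by (simp add: skewincidence_def)

lemma skewincidence_singleton [simp]: "\<not> skewincidence [x] ys"
  by (simp add: skewincidence_def)

lemma skewincidence_Cons_Cons [simp]:
  "skewincidence (x # y # xs) (x' # y' # ys) \<longleftrightarrow>
     x \<and> y' \<or> y \<and> x' \<or> skewincidence (y # xs) (y' # ys)"
proof -
  have ex_nat_cases: "(\<exists>i::nat. Q i) \<longleftrightarrow> Q 0 \<or> (\<exists>j. Q (Suc j))" for Q
    by (metis not0_implies_Suc)
  show ?thesis
    unfolding skewincidence_def by (subst ex_nat_cases) auto
qed

lemma skewincidence_append:
  assumes "skewincidence u u'"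
  shows "skewincidence (u @ v) (u' @ v')"
proof -
  obtain i where i: "Suc i < length u" "Suc i < length u'"
    "u ! i \<and> u' ! Suc i \<or> u ! Suc i \<and> u' ! i"
    using assms unfolding skewincidence_def by blast
  show ?thesis
    unfolding skewincidence_def by (rule exI[of _ i]) (use i in \<open>simp add: nth_append\<close>)
qed

lemma skewincidence_append_same_length:
  assumes "length u = length u'" and "skewincidence v v'"
  shows "skewincidence (u @ v) (u' @ v')"
proof -
  obtain i where i: "Suc i < length v" "Suc i < length v'"
    "v ! i \<and> v' ! Suc i \<or> v ! Suc i \<and> v' ! i"
    using assms(2) unfolding skewincidence_def by blast
  show ?thesis
    unfolding skewincidence_def
    by (rule exI[of _ "i + length u"]) (use assms(1) i in \<open>simp add: nth_append\<close>)
qed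

lemma binstrings_eq_lists: "binstrings n = {xs. set xs \<subseteq> UNIV \<and> length xs = n}"
  by (simp add: binstrings_def)

lemma finite_binstrings [simp]: "finite (binstrings n)"
  unfolding binstrings_eq_lists by (rule finite_lists_length_eq) simp

lemma card_binstrings: "card (binstrings n) = 2 ^ n"
  unfolding binstrings_eq_lists by (subst card_lists_length_eq) simp_all

lemma binstrings_0: "binstrings 0 = {[]}"
  by (auto simp: binstrings_def)

lemma binstrings_Suc:
  "binstrings (Suc n) = Cons True ` binstrings n \<union> Cons False ` binstrings n"
proof -
  have "x \<in> Cons True ` binstrings n \<union> Cons False ` binstrings n" if "length x = Suc n" for x
    using that by (cases x) (auto simp: binstrings_def intro: image_eqI[of _ _ "tl x"])
  then show ?thesis by (auto simp: binstrings_def)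
qed

lemma sum_binstrings_Suc:
  "(\<Sum>x\<in>binstrings (Suc n). f x) = (\<Sum>u\<in>binstrings n. f (True # u) + f (False # u))"
  unfolding binstrings_Suc
  by (subst sum.union_disjoint) (auto simp: sum.reindex sum.distrib)

lemma binstrings_add:
  "binstrings (k + n) = (\<lambda>(u, v). u @ v) ` (binstrings k \<times> binstrings n)"
proof -
  have "x \<in> (\<lambda>(u, v). u @ v) ` (binstrings k \<times> binstrings n)" if "length x = k + n" for x
    using that by (intro image_eqI[of _ _ "(take k x, drop k x)"]) (auto simp: binstrings_def)
  then show ?thesis by (auto simp: binstrings_def)
qed

lemma sum_binstrings_add:
  "(\<Sum>x\<in>binstrings (k + n). f x) = (\<Sum>u\<in>binstrings k. \<Sum>v\<in>binstrings n. f (u @ v))"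
proof -
  have inj: "inj_on (\<lambda>(u, v). u @ v) (binstrings k \<times> binstrings n)"
  proof (rule inj_onI)
    fix p q
    assume "p \<in> binstrings k \<times> binstrings n" "q \<in> binstrings k \<times> binstrings n"
      and "(\<lambda>(u, v). u @ v) p = (\<lambda>(u, v). u @ v) q"
    then show "p = q"
      by (cases p, cases q) (simp add: binstrings_def append_eq_append_conv)
  qed
  have "(\<Sum>x\<in>binstrings (k + n). f x) = (\<Sum>(u, v)\<in>binstrings k \<times> binstrings n. f (u @ v))"
    unfolding binstrings_add by (subst sum.reindex[OF inj]) (simp add: comp_def case_prod_unfold)
  then show ?thesis
    by (simp only: sum.cartesian_product)
qed

function block_count :: "nat \<Rightarrow> (bool list \<Rightarrow> bool) \<Rightarrow> bool list \<Rightarrow> nat" where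
  "block_count k Q xs =
     (if k = 0 \<or> length xs < k then 0
      else of_bool (Q (take k xs)) + block_count k Q (drop k xs))"
  by auto
termination
  by (relation "measure (\<lambda>(_, _, xs). length xs)") auto

declare block_count.simps [simp del]

lemma block_count_short: "length xs < k \<Longrightarrow> block_count k Q xs = 0"
  by (subst block_count.simps) simp

lemma block_count_append:
  assumes "0 < k" and "length u = k"
  shows "block_count k Q (u @ v) = of_bool (Q u) + block_count k Q v"
  using assms by (simp add: block_count.simps[of k Q "u @ v"])

text \<open>Pigeonhole: some block position carries a Q-block in both strings.\<close>

lemma skewincidence_if_many_blocks:
  assumes Q_skew: "\<And>u v. length u = k \<Longrightarrow> length v = k \<Longrightarrow> Q u \<Longrightarrow> Q v \<Longrightarrow> skewincidence u v"
  shows "length x = length y \<Longrightarrow> length x div k < block_count k Q x + block_count k Q y \<Longrightarrow>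
    skewincidence x y"
proof (induction "length x" arbitrary: x y rule: less_induct)
  case less
  show ?case
  proof (cases "k = 0 \<or> length x < k")
    case True
    with less.prems show ?thesis by (auto simp: block_count.simps)
  next
    case False
    define u u' where "u = take k x" and "u' = take k y"
    define v v' where "v = drop k x" and "v' = drop k y"
    have split: "x = u @ v" "y = u' @ v'" and len: "length u = k" "length u' = k"
      using False less.prems(1) by (auto simp: u_def u'_def v_def v'_def)
    show ?thesis
    proof (cases "Q u \<and> Q u'")
      case True
      then show ?thesis
        unfolding split by (intro skewincidence_append Q_skew) (use len in auto)
    next
      case not_both: False
      have "length x div k = Suc (length v div k)"
        using False len by (simp add: split div_add_self1)
      moreover have "of_bool (Q u) + of_bool (Q u') \<le> (1 :: nat)"
        using not_both by auto
      ultimately have "length v div k < block_count k Q v + block_count k Q v'"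
        using less.prems(2) False len by (simp add: split block_count_append)
      moreover have "length v < length x" "length v = length v'"
        using False less.prems(1) len by (auto simp: split)
      ultimately have "skewincidence v v'"
        using less.hyps by blast
      then show ?thesis
        unfolding split using len by (intro skewincidence_append_same_length) simp_all
    qed
  qed
qed

text \<open>The block counts of the uniformly distributed blocks are independent, so their generating
function factorises.\<close>

lemma sum_power_block_count:
  fixes t :: "'a :: comm_semiring_1"
  assumes "0 < k"
  shows "(\<Sum>x\<in>binstrings n. t ^ block_count k Q x) =
    (\<Sum>u\<in>binstrings k. t ^ of_bool (Q u)) ^ (n div k) * 2 ^ (n mod k)"
proof (induction n rule: less_induct)
  case (less n)
  show ?case
  proof (cases "n < k")
    case True
    then show ?thesis
      by (simp add: block_count_short binstrings_def card_binstrings[unfolded binstrings_def])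
  next
    case False
    then obtain m where n: "n = k + m"
      by (metis le_add_diff_inverse not_less)
    have "(\<Sum>x\<in>binstrings n. t ^ block_count k Q x) =
        (\<Sum>u\<in>binstrings k. \<Sum>v\<in>binstrings m. t ^ of_bool (Q u) * t ^ block_count k Q v)"
      unfolding n sum_binstrings_add
      by (intro sum.cong refl) (simp add: assms block_count_append binstrings_def power_add)
    also have "\<dots> = (\<Sum>u\<in>binstrings k. t ^ of_bool (Q u)) * (\<Sum>v\<in>binstrings m. t ^ block_count k Q v)"
      by (simp add: sum_product)
    finally show ?thesis
      using less[of m] assms n by (simp add: div_add_self1 mult.assoc)
  qed
qed

definition good_block :: "bool list \<Rightarrow> bool" where
  "good_block u \<longleftrightarrow> skewincidence u u \<and> u \<noteq> [True, True, False, False, False]"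

lemma length_5_cases: "length u = 5 \<Longrightarrow> \<exists>a b c d e. u = [a, b, c, d, e]"
  by (simp add: eval_nat_numeral length_Suc_conv) blast

lemma good_blocks_skewincidence:
  assumes "length u = 5" "length v = 5" "good_block u" "good_block v"
  shows "skewincidence u v"
proof -
  obtain a b c d e a' b' c' d' e' where "u = [a, b, c, d, e]" "v = [a', b', c', d', e']"
    using length_5_cases assms(1,2) by metis
  with assms(3,4) show ?thesis
    unfolding good_block_def
    by simp (cases a; cases b; cases c; cases d; cases e; simp; sat)
qed

lemma sum_power_good_block:
  "(\<Sum>u\<in>binstrings 5. (t :: real) ^ of_bool (good_block u)) = 18 * t + 14"
proof -
  have "binstrings 5 = binstrings (Suc (Suc (Suc (Suc (Suc 0)))))"
    by (simp add: eval_nat_numeral)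
  then show ?thesis
    by (simp add: sum_binstrings_Suc binstrings_0 good_block_def)
qed

definition majority_good :: "nat \<Rightarrow> bool list set" where
  "majority_good n = {x \<in> binstrings n. n div 5 < 2 * block_count 5 good_block x}"

lemma skew_family_majority_good: "skew_family n (majority_good n)"
proof -
  have "skewincidence x y" if "x \<in> majority_good n" "y \<in> majority_good n" for x y
  proof (rule skewincidence_if_many_blocks)
    show "length x = length y"
      using that by (simp add: majority_good_def binstrings_def)
    show "length x div 5 < block_count 5 good_block x + block_count 5 good_block y"
      using that by (simp add: majority_good_def binstrings_def)
  qed (fact good_blocks_skewincidence)
  then show ?thesis
    by (auto simp: skew_family_def majority_good_def)
qed

text \<open>Exponential Markov inequality with weight (7/8)^(2 block count); the constant
889/896 is (18 (7/8)^2 + 14) / (32 (7/8)).\<close>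

lemma card_not_majority_good:
  "real (card (binstrings n - majority_good n)) \<le> 2 ^ n * (889/896) ^ (n div 5)"
proof -
  let ?m = "n div 5" and ?B = "binstrings n - majority_good n"
  have "real (card ?B) * (7/8) ^ ?m = (\<Sum>x\<in>?B. (7/8) ^ ?m)"
    by simp
  also have "\<dots> \<le> (\<Sum>x\<in>?B. (49/64) ^ block_count 5 good_block x)"
  proof (rule sum_mono)
    fix x assume "x \<in> ?B"
    then have "2 * block_count 5 good_block x \<le> ?m"
      by (auto simp: majority_good_def)
    then have "(7/8 :: real) ^ ?m \<le> (7/8) ^ (2 * block_count 5 good_block x)"
      by (intro power_decreasing) auto
    then show "(7/8 :: real) ^ ?m \<le> (49/64) ^ block_count 5 good_block x"
      by (simp add: power_mult power2_eq_square)
  qed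
  also have "\<dots> \<le> (\<Sum>x\<in>binstrings n. (49/64) ^ block_count 5 good_block x)"
    by (intro sum_mono2) auto
  also have "\<dots> = (889/896 * 28) ^ ?m * 2 ^ (n mod 5)"
    by (simp add: sum_power_block_count sum_power_good_block)
  also have "\<dots> = (889/896) ^ ?m * (2 ^ (5 * ?m) * 2 ^ (n mod 5)) * (7/8) ^ ?m"
    by (simp add: power_mult power_mult_distrib[symmetric])
  also have "\<dots> = 2 ^ n * (889/896) ^ ?m * (7/8) ^ ?m"
    by (simp flip: power_add)
  finally show ?thesis
    by simp
qed

lemma card_majority_good: "2 ^ n * (1 - (889/896) ^ (n div 5)) \<le> real (card (majority_good n))"
proof -
  have sub: "majority_good n \<subseteq> binstrings n"
    by (auto simp: majority_good_def)
  then have "card (majority_good n) \<le> 2 ^ n"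
    using card_mono card_binstrings finite_binstrings by metis
  with sub have "real (card (binstrings n - majority_good n)) = 2 ^ n - real (card (majority_good n))"
    by (simp add: card_Diff_subset finite_subset card_binstrings of_nat_diff)
  with card_not_majority_good[of n] show ?thesis
    by (simp add: algebra_simps)
qed

lemma M_bounds: "card (majority_good n) \<le> M n" "M n \<le> 2 ^ n"
proof -
  have fin: "finite {B. skew_family n B}"
    by (rule finite_subset[of _ "Pow (binstrings n)"]) (auto simp: skew_family_def)
  show "card (majority_good n) \<le> M n"
    unfolding M_def using fin skew_family_majority_good by (intro Max_ge) auto
  have "card B \<le> 2 ^ n" if "skew_family n B" for B
    using that card_mono[of "binstrings n" B] by (auto simp: skew_family_def card_binstrings)
  then show "M n \<le> 2 ^ n"
    unfolding M_def using fin skew_family_majority_good by (subst Max_le_iff) auto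
qed

theorem corollary1:
  shows "(\<lambda>n. real (M n) / 2 ^ n) \<longlonglongrightarrow> 1"
proof (rule tendsto_sandwich[of "\<lambda>n. 1 - (889/896) ^ (n div 5)" _ _ "\<lambda>_. 1"])
  have "2 ^ n * (1 - (889/896) ^ (n div 5)) \<le> real (M n)" for n
    using card_majority_good[of n] M_bounds(1)[of n] by linarith
  then show "\<forall>\<^sub>F n in sequentially. 1 - (889/896) ^ (n div 5) \<le> real (M n) / 2 ^ n"
    by (simp add: field_simps)
  have "real (M n) \<le> 2 ^ n" for n
    using M_bounds(2)[of n] by (simp flip: of_nat_le_iff)
  then show "\<forall>\<^sub>F n in sequentially. real (M n) / 2 ^ n \<le> 1"
    by simp
  have "(\<lambda>n. (889/896 :: real) ^ (n div 5)) \<longlonglongrightarrow> 0"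
    by (rule filterlim_compose[OF LIMSEQ_power_zero filterlim_at_top_div_const_nat]) simp_all
  then show "(\<lambda>n. 1 - (889/896 :: real) ^ (n div 5)) \<longlonglongrightarrow> 1"
    using tendsto_diff[OF tendsto_const[of 1]] by fastforce
qed simp

end
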